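(* Let $\bar{\mathcal{G}}=(\bar{\mathcal{V}},\bar{\mathcal{E}})$ be a finite simple 2-connected graph and $\bar u\in\bar{\mathcal{V}}$, $L=|\bar{\mathcal{V}}|-1$. Then there is an enumeration $\bar v_1,\dots,\bar v_L$ of $\bar{\mathcal{V}}\setminus\{\bar u\}$ such that, writing $\bar{\mathcal{V}}_l=\{\bar v_1,\dots,\bar v_l\}$ and $\mathcal{V}_l$ for the set of edges of $\bar{\mathcal{G}}$ incident to at least one vertex of $\bar{\mathcal{V}}_l$: (i) the graph $\mathrm{LG}(\bar{\mathcal{V}}_l)$ is connected for every $l=1,\dots,L$, and (ii) $\mathcal{V}_l\setminus\mathcal{V}_{l-1}\ne\emptyset$ for every $l=2,\dots,L$.
   Context: For $\bar{\mathcal{V}}'\subseteq\bar{\mathcal{V}}$, $\mathrm{LG}(\bar{\mathcal{V}}')$ is the graph whose vertex set is the set of edges of $\bar{\mathcal{G}}$ incident to at least one vertex of $\bar{\mathcal{V}}'$, in which two distinct such edges $e,e'$ are adjacent iff they share an endpoint belonging to $\bar{\mathcal{V}}'$. (Equivalently, $\mathrm{LG}(\bar{\mathcal{V}}')$ is obtained by placing a complete graph on the set of edges incident to each $\bar v\in\bar{\mathcal{V}}'$ and gluing.) $\mathrm{LG}(\bar{\mathcal{V}})$ is the line graph of $\bar{\mathcal{G}}$. A graph is 2-connected if it is connected, has at least 3 vertices, and has no cut vertex. *)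

theory Defs
  imports Main
begin

definition simple_graph :: "'a set \<Rightarrow> 'a set set \<Rightarrow> bool" where
  "simple_graph V E \<longleftrightarrow> finite V \<and>
     (\<forall>e\<in>E. \<exists>x y. x \<in> V \<and> y \<in> V \<and> x \<noteq> y \<and> e = {x, y})"

definition connected_rel :: "'b set \<Rightarrow> ('b \<Rightarrow> 'b \<Rightarrow> bool) \<Rightarrow> bool" where
  "connected_rel W R \<longleftrightarrow> W \<noteq> {} \<and>
     (\<forall>x\<in>W. \<forall>y\<in>W. (\<lambda>a b. a \<in> W \<and> b \<in> W \<and> R a b)\<^sup>*\<^sup>* x y)"

definition adj :: "'a set set \<Rightarrow> 'a \<Rightarrow> 'a \<Rightarrow> bool" where
  "adj E x y \<longleftrightarrow> {x, y} \<in> E \<and> x \<noteq> y"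

definition graph_connected :: "'a set \<Rightarrow> 'a set set \<Rightarrow> bool" where
  "graph_connected V E \<longleftrightarrow> connected_rel V (adj E)"

definition two_connected :: "'a set \<Rightarrow> 'a set set \<Rightarrow> bool" where
  "two_connected V E \<longleftrightarrow> graph_connected V E \<and> card V \<ge> 3 \<and>
     (\<forall>v\<in>V. graph_connected (V - {v}) {e\<in>E. v \<notin> e})"

definition inc_edges :: "'a set set \<Rightarrow> 'a set \<Rightarrow> 'a set set" where
  "inc_edges E V' = {e\<in>E. e \<inter> V' \<noteq> {}}"

definition LG_adj :: "'a set \<Rightarrow> 'a set \<Rightarrow> 'a set \<Rightarrow> bool" where
  "LG_adj V' e e' \<longleftrightarrow> e \<noteq> e' \<and> (\<exists>v\<in>V'. v \<in> e \<and> v \<in> e')"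

definition LG_connected :: "'a set set \<Rightarrow> 'a set \<Rightarrow> bool" where
  "LG_connected E V' \<longleftrightarrow> connected_rel (inc_edges E V') (LG_adj V')"

end

theory Submission
  imports Defs
begin

text \<open>The enumeration is built backwards. For a connected set \<open>W \<subseteq> V - {u}\<close> we find a
  vertex \<open>x \<in> W\<close> that has a neighbour outside \<open>W\<close> and whose removal leaves \<open>W\<close> connected;
  enumerating \<open>W - {x}\<close> recursively and appending \<open>x\<close> gives an ordering in which every
  prefix induces a connected subgraph and the last vertex of every prefix has a neighbour
  outside it. Connectivity of a prefix in the graph transfers to its line graph, and the
  outside neighbour of the new vertex yields a new incident edge.
  To find \<open>x\<close>, take any \<open>v \<in> W\<close> and a set \<open>C \<subseteq> W - {v}\<close> attached to the rest of \<open>W\<close> only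
  through \<open>v\<close>. Since the graph minus \<open>v\<close> is connected and \<open>u \<notin> W\<close>, some \<open>x \<in> C\<close> has a neighbour
  outside \<open>W\<close>. If \<open>W - {x}\<close> is disconnected, the part not reachable from \<open>v\<close> is a strictly
  smaller such set attached through \<open>x\<close>, and we recurse.\<close>

definition reach_within :: "'b set \<Rightarrow> ('b \<Rightarrow> 'b \<Rightarrow> bool) \<Rightarrow> 'b \<Rightarrow> 'b \<Rightarrow> bool" where
  "reach_within W R = (\<lambda>a b. a \<in> W \<and> b \<in> W \<and> R a b)\<^sup>*\<^sup>*"

lemma connected_rel_iff_reach_within:
  "connected_rel W R \<longleftrightarrow> W \<noteq> {} \<and> (\<forall>x\<in>W. \<forall>y\<in>W. reach_within W R x y)"
  by (simp add: connected_rel_def reach_within_def)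

lemma reach_within_refl [simp]: "reach_within W R a a"
  by (simp add: reach_within_def)

lemma reach_within_step:
  "reach_within W R a b \<Longrightarrow> b \<in> W \<Longrightarrow> c \<in> W \<Longrightarrow> R b c \<Longrightarrow> reach_within W R a c"
  unfolding reach_within_def by (simp add: rtranclp.rtrancl_into_rtrancl)

lemma reach_within_trans:
  "reach_within W R a b \<Longrightarrow> reach_within W R b c \<Longrightarrow> reach_within W R a c"
  unfolding reach_within_def by (rule rtranclp_trans)

lemma reach_within_sym:
  assumes "symp R" "reach_within W R a b"
  shows "reach_within W R b a"
proof -
  have "symp (\<lambda>a b. a \<in> W \<and> b \<in> W \<and> R a b)"
    using assms(1) by (auto simp: symp_def)
  then show ?thesis
    using assms(2) unfolding reach_within_def by (metis symp_rtranclp sympD)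
qed

lemma reach_within_mono:
  assumes "W \<subseteq> W'" "\<And>a b. R a b \<Longrightarrow> R' a b" "reach_within W R a b"
  shows "reach_within W' R' a b"
  using assms(3) unfolding reach_within_def
  by (rule rtranclp_mono[THEN predicate2D, rotated]) (use assms(1,2) in auto)

lemma connected_rel_mono:
  assumes "connected_rel W R" "\<And>a b. R a b \<Longrightarrow> R' a b"
  shows "connected_rel W R'"
proof -
  have "reach_within W R' x y" if "reach_within W R x y" for x y
    using order_refl assms(2) that by (rule reach_within_mono)
  then show ?thesis using assms(1) unfolding connected_rel_iff_reach_within by blast
qed

lemma connected_relI_root:
  assumes "symp R" "v \<in> W" "\<forall>y\<in>W. reach_within W R v y"
  shows "connected_rel W R"
  unfolding connected_rel_iff_reach_within
  using assms by (meson empty_iff reach_within_sym reach_within_trans)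

lemma connected_rel_boundary_edge:
  assumes "connected_rel V R" "C \<subseteq> V" "c \<in> C" "u \<in> V" "u \<notin> C"
  shows "\<exists>a\<in>C. \<exists>b\<in>V - C. R a b"
proof -
  have "reach_within V R c u"
    using assms unfolding connected_rel_iff_reach_within by blast
  then have "u \<in> C \<or> (\<exists>a\<in>C. \<exists>b\<in>V - C. R a b)"
    unfolding reach_within_def
    by (induction rule: rtranclp_induct) (use assms(3) in auto)
  with assms(5) show ?thesis by blast
qed

lemma reach_within_avoid_pendant:
  assumes pendant: "\<forall>a\<in>C. \<forall>b\<in>W. R a b \<longrightarrow> b \<in> C \<or> b = v"
    and "v \<notin> C" "reach_within W R v y" "y \<notin> C"
  shows "reach_within (W - C) R v y"
proof -
  have "y \<in> C \<or> reach_within (W - C) R v y"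
    using assms(3) unfolding reach_within_def
  proof (induction rule: rtranclp_induct)
    case (step y z)
    show ?case
    proof (cases "y \<in> C")
      case True
      then show ?thesis using step pendant by auto
    next
      case False
      then show ?thesis
        using step by (cases "z \<in> C") (auto intro: rtranclp.rtrancl_into_rtrancl)
    qed
  qed simp
  with assms(4) show ?thesis by blast
qed

lemma symp_adj: "symp (adj E)"
  by (auto simp: symp_def adj_def insert_commute)

lemma adj_mono: "E' \<subseteq> E \<Longrightarrow> adj E' a b \<Longrightarrow> adj E a b"
  by (auto simp: adj_def)

lemma removable_vertex_with_exit:
  assumes two_conn: "\<And>v. v \<in> V \<Longrightarrow> graph_connected (V - {v}) {e\<in>E. v \<notin> e}"
    and W_sub: "W \<subseteq> V" and u: "u \<in> V" "u \<notin> W"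
    and W_fin: "finite W" and W_conn: "connected_rel W (adj E)"
    and C: "v \<in> W" "C \<subseteq> W - {v}" "C \<noteq> {}"
    and pendant: "\<forall>a\<in>C. \<forall>b\<in>W. adj E a b \<longrightarrow> b \<in> C \<or> b = v"
  shows "\<exists>x\<in>C. (\<exists>w\<in>V - W. adj E x w) \<and> connected_rel (W - {x}) (adj E)"
  using C pendant
proof (induction "card C" arbitrary: v C rule: less_induct)
  case less
  obtain c where c: "c \<in> C" using less.prems(3) by blast
  have "connected_rel (V - {v}) (adj {e\<in>E. v \<notin> e})"
    using two_conn less.prems(1) W_sub unfolding graph_connected_def by blast
  then have "\<exists>a\<in>C. \<exists>b\<in>V - {v} - C. adj {e\<in>E. v \<notin> e} a b"
    by (rule connected_rel_boundary_edge) (use c less.prems(1,2) W_sub u in auto)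
  then obtain x w where x: "x \<in> C" "w \<in> V - {v} - C" "adj {e\<in>E. v \<notin> e} x w"
    by blast
  have "adj E x w" using x(3) by (rule adj_mono[rotated]) blast
  with x(2) less.prems(4) x(1) have w: "w \<in> V - W" "adj E x w" by auto
  show ?case
  proof (cases "connected_rel (W - {x}) (adj E)")
    case True
    with x(1) w show ?thesis by blast
  next
    case disconnected: False
    have v: "v \<in> W - {x}" using less.prems(1,2) x(1) by blast
    define D where "D = {y \<in> W - {x}. \<not> reach_within (W - {x}) (adj E) v y}"
    have "D \<noteq> {}"
      using disconnected connected_relI_root[OF symp_adj v] unfolding D_def by blast
    have D_sub: "D \<subseteq> C - {x}"
    proof
      fix y assume y: "y \<in> D"
      have "reach_within W (adj E) v y"
        using W_conn less.prems(1) y unfolding connected_rel_iff_reach_within D_def by blast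
      then have "y \<in> C \<or> reach_within (W - C) (adj E) v y"
        using reach_within_avoid_pendant[OF less.prems(4)] less.prems(2) by blast
      then have "y \<in> C \<or> reach_within (W - {x}) (adj E) v y"
        using x(1) reach_within_mono[of "W - C" "W - {x}"] by blast
      with y show "y \<in> C - {x}" unfolding D_def by blast
    qed
    have "finite C" using less.prems(2) W_fin finite_subset by blast
    then have "card D \<le> card (C - {x})" using D_sub by (intro card_mono) auto
    also have "\<dots> < card C" using \<open>finite C\<close> x(1) by (rule card_Diff1_less)
    finally have "card D < card C" .
    moreover have "x \<in> W" "D \<subseteq> W - {x}"
      using less.prems(2) x(1) unfolding D_def by auto
    moreover have "\<forall>a\<in>D. \<forall>b\<in>W. adj E a b \<longrightarrow> b \<in> D \<or> b = x"
    proof (intro ballI impI)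
      fix a b assume a: "a \<in> D" and b: "b \<in> W" and "adj E a b"
      then have "adj E b a" using symp_adj by (metis sympD)
      show "b \<in> D \<or> b = x"
      proof (rule ccontr)
        assume "\<not> (b \<in> D \<or> b = x)"
        then have "reach_within (W - {x}) (adj E) v b" using b unfolding D_def by blast
        then have "reach_within (W - {x}) (adj E) v a"
          using \<open>adj E b a\<close> \<open>\<not> (b \<in> D \<or> b = x)\<close> a b unfolding D_def
          by (blast intro: reach_within_step)
        with a show False unfolding D_def by blast
      qed
    qed
    ultimately obtain y where "y \<in> D" "\<exists>w\<in>V - W. adj E y w" "connected_rel (W - {y}) (adj E)"
      using less.hyps \<open>D \<noteq> {}\<close> by blast
    with D_sub show ?thesis by blast
  qed
qed

definition exit_ordering :: "'a set \<Rightarrow> 'a set set \<Rightarrow> 'a list \<Rightarrow> bool" where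
  "exit_ordering V E vs \<longleftrightarrow> distinct vs \<and>
     (\<forall>l < length vs. connected_rel (set (take (Suc l) vs)) (adj E) \<and>
        (\<exists>w\<in>V - set (take (Suc l) vs). adj E (vs ! l) w))"

lemma exit_ordering_Nil: "exit_ordering V E []"
  by (simp add: exit_ordering_def)

lemma exit_ordering_snoc:
  assumes "exit_ordering V E ws" "x \<notin> set ws"
    and "connected_rel (insert x (set ws)) (adj E)" "w \<in> V - insert x (set ws)" "adj E x w"
  shows "exit_ordering V E (ws @ [x])"
proof -
  have "\<forall>l < length (ws @ [x]). connected_rel (set (take (Suc l) (ws @ [x]))) (adj E) \<and>
      (\<exists>w\<in>V - set (take (Suc l) (ws @ [x])). adj E ((ws @ [x]) ! l) w)"
  proof (intro allI impI)
    fix l assume "l < length (ws @ [x])"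
    then consider "l < length ws" | "l = length ws" by fastforce
    then show "connected_rel (set (take (Suc l) (ws @ [x]))) (adj E) \<and>
        (\<exists>w\<in>V - set (take (Suc l) (ws @ [x])). adj E ((ws @ [x]) ! l) w)"
    proof cases
      case 1
      then show ?thesis using assms(1) by (simp add: exit_ordering_def nth_append)
    next
      case 2
      then show ?thesis using assms(3-5) by auto
    qed
  qed
  moreover have "distinct (ws @ [x])" using assms(1,2) by (simp add: exit_ordering_def)
  ultimately show ?thesis unfolding exit_ordering_def by blast
qed

lemma exit_ordering_exists:
  assumes two_conn: "\<And>v. v \<in> V \<Longrightarrow> graph_connected (V - {v}) {e\<in>E. v \<notin> e}"
    and "graph_connected V E" "finite V" "u \<in> V"
    and "W \<subseteq> V - {u}" "W = {} \<or> connected_rel W (adj E)"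
  shows "\<exists>vs. set vs = W \<and> exit_ordering V E vs"
  using assms(5,6)
proof (induction "card W" arbitrary: W rule: less_induct)
  case less
  show ?case
  proof (cases "W = {}")
    case True
    then show ?thesis by (intro exI[of _ "[]"]) (simp add: exit_ordering_Nil)
  next
    case False
    with less.prems(2) have conn: "connected_rel W (adj E)" by blast
    have fin: "finite W" using less.prems(1) assms(3) finite_subset by blast
    obtain x w where x: "x \<in> W" "w \<in> V - W" "adj E x w"
      and rest: "W - {x} = {} \<or> connected_rel (W - {x}) (adj E)"
    proof (cases "\<exists>v. W = {v}")
      case True
      then obtain v where "W = {v}" by blast
      moreover have "\<exists>a\<in>W. \<exists>b\<in>V - W. adj E a b"
        using assms(2,4) less.prems(1) \<open>W = {v}\<close> unfolding graph_connected_def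
        by (intro connected_rel_boundary_edge[of V "adj E" W v u]) auto
      ultimately show ?thesis using that by blast
    next
      case False
      obtain v where v: "v \<in> W" using \<open>W \<noteq> {}\<close> by blast
      have "\<exists>x\<in>W - {v}. (\<exists>w\<in>V - W. adj E x w) \<and> connected_rel (W - {x}) (adj E)"
        using removable_vertex_with_exit[OF two_conn, of W u v "W - {v}"] less.prems(1)
          assms(4) fin conn v False
        by blast
      then show ?thesis using that by blast
    qed
    have "card (W - {x}) < card W" using fin x(1) by (rule card_Diff1_less)
    then obtain ws where ws: "set ws = W - {x}" "exit_ordering V E ws"
      using less.hyps less.prems(1) rest by blast
    have "insert x (set ws) = W" using ws(1) x(1) by blast
    then have "exit_ordering V E (ws @ [x])"
      using exit_ordering_snoc[OF ws(2), of x w] ws(1) x conn by simp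
    then show ?thesis using ws(1) x(1) by (intro exI[of _ "ws @ [x]"]) auto
  qed
qed

lemma exit_ordering_new_edge:
  assumes "exit_ordering V E vs" "l < length vs"
  shows "inc_edges E (set (take (Suc l) vs)) - inc_edges E (set (take l vs)) \<noteq> {}"
proof -
  obtain w where w: "w \<in> V - set (take (Suc l) vs)" "adj E (vs ! l) w"
    using assms unfolding exit_ordering_def by blast
  have take: "take (Suc l) vs = take l vs @ [vs ! l]"
    using assms(2) by (rule take_Suc_conv_app_nth)
  have "vs ! l \<notin> set (take l vs)"
    using assms(1) take distinct_take[of vs "Suc l"] unfolding exit_ordering_def by auto
  then have "{vs ! l, w} \<in> inc_edges E (set (take (Suc l) vs)) - inc_edges E (set (take l vs))"
    using w take unfolding inc_edges_def adj_def by auto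
  then show ?thesis by blast
qed

lemma LG_reach_at_common_vertex:
  assumes "e \<in> inc_edges E S" "e' \<in> inc_edges E S" "t \<in> S" "t \<in> e" "t \<in> e'"
  shows "reach_within (inc_edges E S) (LG_adj S) e e'"
proof (cases "e = e'")
  case False
  then have "LG_adj S e e'" using assms(3-5) unfolding LG_adj_def by blast
  then show ?thesis
    using assms(1,2) unfolding reach_within_def by (intro r_into_rtranclp) simp
qed simp

lemma LG_reach_along_walk:
  assumes "reach_within S (adj E) s t" "s \<in> S" "e \<in> inc_edges E S" "s \<in> e"
    and "e' \<in> inc_edges E S" "t \<in> e'"
  shows "reach_within (inc_edges E S) (LG_adj S) e e'"
  using assms(1,5,6) unfolding reach_within_def[of S]
proof (induction arbitrary: e' rule: rtranclp_induct)
  case base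
  then show ?case using LG_reach_at_common_vertex[OF assms(3)] assms(2,4) by blast
next
  case (step y z)
  have yz: "{y, z} \<in> inc_edges E S" using step(2) unfolding inc_edges_def adj_def by auto
  have "reach_within (inc_edges E S) (LG_adj S) e {y, z}" using step(3) yz by simp
  moreover have "reach_within (inc_edges E S) (LG_adj S) {y, z} e'"
    using LG_reach_at_common_vertex[OF yz step(4)] step(2,5) by blast
  ultimately show ?case by (rule reach_within_trans)
qed

lemma LG_connected_if_connected:
  assumes conn: "connected_rel S (adj E)" and nonisolated: "\<forall>s\<in>S. \<exists>y. adj E s y"
  shows "LG_connected E S"
  unfolding LG_connected_def connected_rel_iff_reach_within
proof (intro conjI ballI)
  obtain s y where "s \<in> S" "adj E s y"
    using conn nonisolated unfolding connected_rel_def by blast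
  then have "{s, y} \<in> inc_edges E S" unfolding adj_def inc_edges_def by auto
  then show "inc_edges E S \<noteq> {}" by blast
next
  fix e e' assume e: "e \<in> inc_edges E S" and e': "e' \<in> inc_edges E S"
  obtain s t where "s \<in> e" "s \<in> S" "t \<in> e'" "t \<in> S"
    using e e' unfolding inc_edges_def by blast
  with conn show "reach_within (inc_edges E S) (LG_adj S) e e'"
    using LG_reach_along_walk e e' unfolding connected_rel_iff_reach_within by metis
qed

lemma exit_ordering_LG_connected:
  assumes ord: "exit_ordering V E vs" and l: "0 < l" "l \<le> length vs"
  shows "LG_connected E (set (take l vs))"
proof (rule LG_connected_if_connected)
  obtain k where "l = Suc k" "k < length vs" using l by (cases l) auto
  then show "connected_rel (set (take l vs)) (adj E)"
    using ord unfolding exit_ordering_def by blast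
  show "\<forall>s\<in>set (take l vs). \<exists>y. adj E s y"
  proof
    fix s assume "s \<in> set (take l vs)"
    then obtain k where "k < length vs" "s = vs ! k"
      by (auto simp: in_set_conv_nth)
    then show "\<exists>y. adj E s y" using ord unfolding exit_ordering_def by blast
  qed
qed

theorem mainTheorem10:
  fixes V :: "'a set" and E :: "'a set set" and u :: 'a
  assumes "simple_graph V E" and "two_connected V E" and "u \<in> V"
  shows "\<exists>vs. distinct vs \<and> set vs = V - {u} \<and> length vs = card V - 1 \<and>
    (\<forall>l\<in>{1..length vs}. LG_connected E (set (take l vs))) \<and>
    (\<forall>l\<in>{2..length vs}. inc_edges E (set (take l vs)) - inc_edges E (set (take (l - 1) vs)) \<noteq> {})"
proof -
  have fin: "finite V" using assms(1) unfolding simple_graph_def by blast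
  have conn: "graph_connected V E"
    and two_conn: "\<And>v. v \<in> V \<Longrightarrow> graph_connected (V - {v}) {e\<in>E. v \<notin> e}"
    using assms(2) unfolding two_connected_def by auto
  have "connected_rel (V - {u}) (adj E)"
    using two_conn[OF assms(3)] unfolding graph_connected_def
    by (rule connected_rel_mono) (simp add: adj_def)
  then obtain vs where vs: "set vs = V - {u}" "exit_ordering V E vs"
    using exit_ordering_exists[OF two_conn conn fin assms(3)] by blast
  have "distinct vs" using vs(2) unfolding exit_ordering_def by blast
  show ?thesis
  proof (intro exI[of _ vs] conjI ballI)
    show "length vs = card V - 1"
      using distinct_card[OF \<open>distinct vs\<close>] vs(1) fin assms(3) by (simp add: card_Diff_singleton)
  next
    fix l assume "l \<in> {1..length vs}"
    then show "LG_connected E (set (take l vs))" using exit_ordering_LG_connected[OF vs(2)] by simp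
  next
    fix l assume "l \<in> {2..length vs}"
    then obtain k where "l = Suc k" "k < length vs" by (cases l) auto
    then show "inc_edges E (set (take l vs)) - inc_edges E (set (take (l - 1) vs)) \<noteq> {}"
      using exit_ordering_new_edge[OF vs(2)] by simp
  qed (use vs(1) \<open>distinct vs\<close> in simp_all)
qed

end
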